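(* Let $5\leq p_1<\cdots<p_m$ be $m$ distinct primes. Then the set of integers $x$ such that for each $i=1,\ldots,m$ there is an odd integer $k_i$ with $x=k_ip_i+4N(p_i/6)$ or $x=k_ip_i-4N(p_i/6)$ (the $m$-fold non-ranks of $p_1,\ldots,p_m$) is the union of exactly $2^m$ pairwise distinct arithmetic progressions (residue classes) with common difference $2p_1\cdots p_m$.
   Context: $N(x)$ denotes the integer nearest to the real number $x$. *)

theory Defs
  imports Complex_Main "HOL-Computational_Algebra.Primes"
begin

(* N(x): the integer nearest to x. We use the library's round (= floor (x + 1/2));
   for x = p/6 with p >= 5 prime there is never a tie, so the choice is immaterial. *)
definition N :: "real \<Rightarrow> int" where
  "N x = round x"

definition nonranks :: "nat \<Rightarrow> (nat \<Rightarrow> nat) \<Rightarrow> int set" where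
  "nonranks m p = {x. \<forall>i<m. \<exists>k::int. odd k \<and>
      (x = k * int (p i) + 4 * N (real (p i) / 6) \<or> x = k * int (p i) - 4 * N (real (p i) / 6))}"

end

theory Submission
  imports Defs "HOL-Number_Theory.Cong"
begin

text \<open>
  Write \<open>c = 4 N(p/6)\<close>. Since \<open>p\<close> and \<open>k\<close> are odd and \<open>c\<close> is even, \<open>x\<close> is a non-rank of
  \<open>p\<close> exactly when \<open>x\<close> is odd and \<open>x \<equiv> \<plusminus>c (mod p)\<close>. As \<open>0 < N(p/6) < p\<close>, the prime
  \<open>p \<ge> 5\<close> does not divide \<open>2c\<close>, so these are two distinct classes mod \<open>p\<close>. The moduli
  \<open>2, p\<^sub>1, \<dots>, p\<^sub>m\<close> are pairwise coprime, and the Chinese remainder theorem turns the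
  \<open>1 \<cdot> 2 \<cdots> 2\<close> admissible choices of residues into \<open>2\<^sup>m\<close> classes mod \<open>2 p\<^sub>1 \<cdots> p\<^sub>m\<close>.
\<close>

lemma bij_betw_mod_pair:
  fixes a b :: int
  assumes "a > 0" and "b > 0" and "coprime a b"
  shows "bij_betw (\<lambda>r. (r mod a, r mod b)) {0..<a * b} ({0..<a} \<times> {0..<b})"
proof -
  let ?f = "\<lambda>r. (r mod a, r mod b)"
  have inj: "inj_on ?f {0..<a * b}"
  proof (rule inj_onI)
    fix r s assume r: "r \<in> {0..<a * b}" and s: "s \<in> {0..<a * b}" and "?f r = ?f s"
    then have "a dvd r - s" "b dvd r - s" by (auto simp: mod_eq_dvd_iff)
    then have "a * b dvd r - s" using divides_mult \<open>coprime a b\<close> by blast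
    with r s show "r = s" by (metis atLeastLessThan_iff cong_iff_dvd_diff cong_less_imp_eq_int)
  qed
  have sub: "?f ` {0..<a * b} \<subseteq> {0..<a} \<times> {0..<b}" using assms by auto
  have "card (?f ` {0..<a * b}) = card ({0..<a} \<times> {0..<b})"
    using card_image[OF inj] assms by (simp add: card_cartesian_product nat_mult_distrib)
  then have "?f ` {0..<a * b} = {0..<a} \<times> {0..<b}"
    using card_subset_eq[OF _ sub] by simp
  with inj show ?thesis by (simp add: bij_betw_def)
qed

lemma card_mod_pair_preimage:
  fixes a b :: int
  assumes "a > 0" and "b > 0" and "coprime a b" and "A \<subseteq> {0..<a}" and "B \<subseteq> {0..<b}"
  shows "card {r \<in> {0..<a * b}. r mod a \<in> A \<and> r mod b \<in> B} = card A * card B"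
proof -
  let ?f = "\<lambda>r. (r mod a, r mod b)"
  let ?S = "{r \<in> {0..<a * b}. r mod a \<in> A \<and> r mod b \<in> B}"
  have bij: "bij_betw ?f {0..<a * b} ({0..<a} \<times> {0..<b})"
    using bij_betw_mod_pair[OF assms(1-3)] .
  have "A \<times> B \<subseteq> ?f ` {0..<a * b}"
    using bij assms(4,5) by (auto simp: bij_betw_def)
  then have "?f ` ?S = A \<times> B" by auto
  moreover have "bij_betw ?f ?S (?f ` ?S)"
    by (rule bij_betw_subset[OF bij]) auto
  ultimately have "bij_betw ?f ?S (A \<times> B)" by simp
  then show ?thesis by (simp add: bij_betw_same_card card_cartesian_product)
qed

definition pm_cong :: "int \<Rightarrow> int \<Rightarrow> int \<Rightarrow> bool" where
  "pm_cong q c x \<longleftrightarrow> [x = c] (mod q) \<or> [x = - c] (mod q)"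

lemma pm_cong_mod:
  assumes "q dvd a"
  shows "pm_cong q c (x mod a) \<longleftrightarrow> pm_cong q c x"
  using assms by (simp add: pm_cong_def cong_def mod_mod_cancel)

lemma card_pm_cong_residues:
  fixes q c :: int
  assumes "q > 0" and "\<not> q dvd 2 * c"
  shows "card {r \<in> {0..<q}. pm_cong q c r} = 2"
proof -
  have "{r \<in> {0..<q}. pm_cong q c r} = {c mod q, (- c) mod q}"
    using assms(1) by (auto simp: pm_cong_def cong_def)
  moreover have "c mod q \<noteq> (- c) mod q"
    using assms(2) by (auto simp: mod_eq_dvd_iff)
  ultimately show ?thesis by simp
qed

lemma card_odd_pm_cong_residues:
  fixes q c :: "nat \<Rightarrow> int"
  assumes "\<And>i. i < n \<Longrightarrow> q i > 0"
    and "\<And>i. i < n \<Longrightarrow> coprime (2 * (\<Prod>j<i. q j)) (q i)"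
    and "\<And>i. i < n \<Longrightarrow> \<not> q i dvd 2 * c i"
  shows "card {r \<in> {0..<2 * (\<Prod>i<n. q i)}. odd r \<and> (\<forall>i<n. pm_cong (q i) (c i) r)} = 2 ^ n"
  using assms
proof (induction n)
  case 0
  have "{r \<in> {0..<2}. odd r} = {1::int}" by auto presburger
  then show ?case by simp
next
  case (Suc n)
  define a where "a = 2 * (\<Prod>i<n. q i)"
  define S where "S = {r \<in> {0..<a}. odd r \<and> (\<forall>i<n. pm_cong (q i) (c i) r)}"
  define T where "T = {r \<in> {0..<q n}. pm_cong (q n) (c n) r}"
  have card_S: "card S = 2 ^ n" unfolding S_def a_def using Suc by auto
  have card_T: "card T = 2" unfolding T_def using Suc.prems by (intro card_pm_cong_residues) auto
  have "a > 0" unfolding a_def using Suc.prems by (auto intro: prod_pos)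
  have "q i dvd a" if "i < n" for i
    unfolding a_def using that by (intro dvd_mult dvd_prodI) auto
  then have "{r \<in> {0..<2 * (\<Prod>i<Suc n. q i)}. odd r \<and> (\<forall>i<Suc n. pm_cong (q i) (c i) r)}
      = {r \<in> {0..<a * q n}. r mod a \<in> S \<and> r mod q n \<in> T}"
    using \<open>a > 0\<close> Suc.prems(1)[of n] dvd_mod_iff[of 2 a, unfolded a_def]
    by (auto simp: S_def T_def a_def less_Suc_eq pm_cong_mod mult.assoc)
  moreover have "card {r \<in> {0..<a * q n}. r mod a \<in> S \<and> r mod q n \<in> T} = card S * card T"
    using \<open>a > 0\<close> Suc.prems(1,2)[of n] by (intro card_mod_pair_preimage) (auto simp: S_def T_def a_def)
  ultimately show ?case using card_S card_T by simp
qed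

lemma nonrank_iff_odd_pm_cong:
  fixes q c x :: int
  assumes "odd q" and "even c"
  shows "(\<exists>k. odd k \<and> (x = k * q + c \<or> x = k * q - c)) \<longleftrightarrow> odd x \<and> pm_cong q c x"
proof
  assume "\<exists>k. odd k \<and> (x = k * q + c \<or> x = k * q - c)"
  with assms show "odd x \<and> pm_cong q c x"
    by (auto simp: pm_cong_def cong_iff_dvd_diff)
next
  have witness: "\<exists>k. odd k \<and> x = k * q + d" if "odd x" "even d" "q dvd x - d" for d
  proof -
    obtain k where k: "x - d = q * k" using \<open>q dvd x - d\<close> by blast
    with that have "odd k" by (metis even_mult_iff odd_add diff_add_cancel)
    with k show ?thesis by (auto simp: algebra_simps)
  qed
  assume "odd x \<and> pm_cong q c x"
  then show "\<exists>k. odd k \<and> (x = k * q + c \<or> x = k * q - c)"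
    using witness[of c] witness[of "- c"] assms by (auto simp: pm_cong_def cong_iff_dvd_diff)
qed

text \<open>For \<open>m = 0\<close> every integer is a non-rank; \<open>m \<ge> 1\<close> is what forces \<open>x\<close> to be odd.\<close>

lemma nonranks_eq_odd_pm_cong:
  assumes "m \<ge> 1" and "\<And>i. i < m \<Longrightarrow> odd (p i)"
  shows "nonranks m p = {x. odd x \<and> (\<forall>i<m. pm_cong (p i) (4 * N (real (p i) / 6)) x)}"
proof -
  have "\<And>i x. i < m \<Longrightarrow> (\<exists>k. odd k \<and> (x = k * int (p i) + 4 * N (real (p i) / 6)
           \<or> x = k * int (p i) - 4 * N (real (p i) / 6)))
         \<longleftrightarrow> odd x \<and> pm_cong (p i) (4 * N (real (p i) / 6)) x"
    using assms(2) by (intro nonrank_iff_odd_pm_cong) auto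
  then show ?thesis
    using assms(1) unfolding nonranks_def by (auto intro!: exI[of _ 0])
qed

lemma nearest_sixth_bounds:
  assumes "5 \<le> p"
  shows "0 < N (real p / 6)" and "N (real p / 6) < int p"
  using of_int_round_ge[of "real p / 6"] of_int_round_le[of "real p / 6"] assms
  unfolding N_def by linarith+

lemma prime_not_dvd_nonrank_offset:
  assumes "prime p" and "5 \<le> p"
  shows "\<not> int p dvd 2 * (4 * N (real p / 6))"
proof
  assume "int p dvd 2 * (4 * N (real p / 6))"
  then have "int p dvd 2 ^ 3 \<or> int p dvd N (real p / 6)"
    using assms(1) by (simp add: prime_dvd_mult_iff)
  moreover have "\<not> int p dvd 2 ^ 3"
  proof
    assume "int p dvd 2 ^ 3"
    then have "int p dvd 2" using assms(1) prime_dvd_power by (metis prime_nat_int_transfer)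
    with assms(2) show False by (auto dest: zdvd_imp_le)
  qed
  moreover have "\<not> int p dvd N (real p / 6)"
    using nearest_sixth_bounds[OF assms(2)] zdvd_not_zless by blast
  ultimately show False by blast
qed

lemma coprime_two_times_prod_primes:
  assumes "prime q" and "q \<noteq> 2" and "\<And>j. j \<in> J \<Longrightarrow> prime (p j) \<and> p j \<noteq> q"
  shows "coprime (2 * (\<Prod>j\<in>J. int (p j))) (int q)"
proof -
  have "coprime (int (p j)) (int q)" if "j \<in> J" for j
    using assms(3)[OF that] assms(1) by (auto intro: primes_coprime)
  moreover have "coprime 2 (int q)"
    by (rule primes_coprime) (use assms(1,2) in auto)
  ultimately show ?thesis by (simp add: prod_coprime_left)
qed

lemma odd_pm_cong_set_eq_residues:
  fixes q c :: "nat \<Rightarrow> int" and M :: int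
  assumes "M > 0" and "even M" and "\<And>i. i < n \<Longrightarrow> q i dvd M"
  shows "{x. odd x \<and> (\<forall>i<n. pm_cong (q i) (c i) x)}
    = {x. x mod M \<in> {r \<in> {0..<M}. odd r \<and> (\<forall>i<n. pm_cong (q i) (c i) r)}}"
proof -
  have "(odd (x mod M) \<and> (\<forall>i<n. pm_cong (q i) (c i) (x mod M)))
      \<longleftrightarrow> (odd x \<and> (\<forall>i<n. pm_cong (q i) (c i) x))" for x
    using dvd_mod_iff[OF \<open>even M\<close>, of x] assms(3) by (simp add: pm_cong_mod)
  with \<open>M > 0\<close> show ?thesis by auto
qed

theorem theorem3p13:
  fixes m :: nat and p :: "nat \<Rightarrow> nat"
  assumes "m \<ge> 1"
    and "\<And>i. i < m \<Longrightarrow> prime (p i)"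
    and "\<And>i j. i < j \<Longrightarrow> j < m \<Longrightarrow> p i < p j"
    and "5 \<le> p 0"
  shows "\<exists>R :: int set. R \<subseteq> {0..<2 * (\<Prod>i<m. int (p i))} \<and> card R = 2 ^ m \<and>
           nonranks m p = {x. x mod (2 * (\<Prod>i<m. int (p i))) \<in> R}"
proof -
  define M where "M = 2 * (\<Prod>i<m. int (p i))"
  define c where "c i = 4 * N (real (p i) / 6)" for i
  define R where "R = {r \<in> {0..<M}. odd r \<and> (\<forall>i<m. pm_cong (p i) (c i) r)}"
  have ge5: "5 \<le> p i" if "i < m" for i
    using assms(3)[of 0 i] assms(4) that by (cases "i = 0") auto
  have odd_p: "odd (p i)" if "i < m" for i
    using prime_odd_nat[OF assms(2)] ge5 that by fastforce
  have "card R = 2 ^ m"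
    unfolding R_def M_def
  proof (rule card_odd_pm_cong_residues)
    fix i assume "i < m"
    then show "int (p i) > 0" using ge5 by fastforce
    show "coprime (2 * (\<Prod>j<i. int (p j))) (int (p i))"
      using assms(2,3) \<open>i < m\<close> ge5[OF \<open>i < m\<close>]
      by (intro coprime_two_times_prod_primes) (auto dest: less_imp_neq)
    show "\<not> int (p i) dvd 2 * c i"
      unfolding c_def using \<open>i < m\<close> assms(2) ge5 by (intro prime_not_dvd_nonrank_offset)
  qed
  moreover have "nonranks m p = {x. x mod M \<in> R}"
  proof -
    have "nonranks m p = {x. odd x \<and> (\<forall>i<m. pm_cong (p i) (c i) x)}"
      unfolding c_def using assms(1) odd_p by (rule nonranks_eq_odd_pm_cong)
    also have "\<dots> = {x. x mod M \<in> R}"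
      unfolding R_def M_def using ge5
      by (intro odd_pm_cong_set_eq_residues) (force intro: prod_pos dvd_mult dvd_prodI)+
    finally show ?thesis .
  qed
  moreover have "R \<subseteq> {0..<M}" unfolding R_def by blast
  ultimately show ?thesis unfolding M_def[symmetric] by blast
qed

end
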